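(* Every threshold graph is edge simplicial and co-edge simplicial. Moreover, there exists a graph that is edge simplicial and co-edge simplicial but not threshold.
   Context: A graph is threshold if it has no induced subgraph isomorphic to $2K_2$, $C_4$ or $P_4$ (equivalently, its vertex set partitions into a stable set $I$ and a clique $K$ such that the vertices of $I$ can be ordered $u_1,\dots,u_k$ with $N(u_1)\subseteq\cdots\subseteq N(u_k)$). A clique $C$ is simplicial if $C=N[v]$ for some vertex $v$; a graph is edge simplicial if every edge lies in a simplicial clique, and co-edge simplicial if its complement is edge simplicial. *)

theory Defs
  imports Main
begin

definition graph :: "'a set \<Rightarrow> ('a \<Rightarrow> 'a \<Rightarrow> bool) \<Rightarrow> bool" where
  "graph V E \<longleftrightarrow> finite V \<and> (\<forall>x\<in>V. \<forall>y\<in>V. E x y \<longrightarrow> E y x) \<and> (\<forall>x\<in>V. \<not> E x x)"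

definition has_induced :: "'a set \<Rightarrow> ('a \<Rightarrow> 'a \<Rightarrow> bool) \<Rightarrow> 'b set \<Rightarrow> ('b \<Rightarrow> 'b \<Rightarrow> bool) \<Rightarrow> bool" where
  "has_induced V E W F \<longleftrightarrow>
     (\<exists>f. inj_on f W \<and> f ` W \<subseteq> V \<and> (\<forall>x\<in>W. \<forall>y\<in>W. E (f x) (f y) \<longleftrightarrow> F x y))"

definition twoK2 :: "nat \<Rightarrow> nat \<Rightarrow> bool" where
  "twoK2 x y \<longleftrightarrow> {x, y} = {0, 1} \<or> {x, y} = {2, 3}"

definition C4 :: "nat \<Rightarrow> nat \<Rightarrow> bool" where
  "C4 x y \<longleftrightarrow> {x, y} = {0, 1} \<or> {x, y} = {1, 2} \<or> {x, y} = {2, 3} \<or> {x, y} = {3, 0}"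

definition P4 :: "nat \<Rightarrow> nat \<Rightarrow> bool" where
  "P4 x y \<longleftrightarrow> {x, y} = {0, 1} \<or> {x, y} = {1, 2} \<or> {x, y} = {2, 3}"

definition threshold :: "'a set \<Rightarrow> ('a \<Rightarrow> 'a \<Rightarrow> bool) \<Rightarrow> bool" where
  "threshold V E \<longleftrightarrow>
     \<not> has_induced V E {0..3} twoK2 \<and> \<not> has_induced V E {0..3} C4 \<and> \<not> has_induced V E {0..3} P4"

definition clique :: "'a set \<Rightarrow> ('a \<Rightarrow> 'a \<Rightarrow> bool) \<Rightarrow> 'a set \<Rightarrow> bool" where
  "clique V E C \<longleftrightarrow> C \<subseteq> V \<and> (\<forall>x\<in>C. \<forall>y\<in>C. x \<noteq> y \<longrightarrow> E x y)"

definition closed_nbhd :: "'a set \<Rightarrow> ('a \<Rightarrow> 'a \<Rightarrow> bool) \<Rightarrow> 'a \<Rightarrow> 'a set" where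
  "closed_nbhd V E v = {u \<in> V. u = v \<or> E v u}"

definition simplicial_clique :: "'a set \<Rightarrow> ('a \<Rightarrow> 'a \<Rightarrow> bool) \<Rightarrow> 'a set \<Rightarrow> bool" where
  "simplicial_clique V E C \<longleftrightarrow> clique V E C \<and> (\<exists>v\<in>V. C = closed_nbhd V E v)"

definition edge_simplicial :: "'a set \<Rightarrow> ('a \<Rightarrow> 'a \<Rightarrow> bool) \<Rightarrow> bool" where
  "edge_simplicial V E \<longleftrightarrow>
     (\<forall>x\<in>V. \<forall>y\<in>V. E x y \<longrightarrow> (\<exists>C. simplicial_clique V E C \<and> x \<in> C \<and> y \<in> C))"

definition compl_rel :: "('a \<Rightarrow> 'a \<Rightarrow> bool) \<Rightarrow> 'a \<Rightarrow> 'a \<Rightarrow> bool" where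
  "compl_rel E x y \<longleftrightarrow> x \<noteq> y \<and> \<not> E x y"

definition co_edge_simplicial :: "'a set \<Rightarrow> ('a \<Rightarrow> 'a \<Rightarrow> bool) \<Rightarrow> bool" where
  "co_edge_simplicial V E \<longleftrightarrow> edge_simplicial V (compl_rel E)"

end

theory Submission
  imports Defs
begin

text \<open>Given an edge \<open>xy\<close>, pick \<open>v\<close> with \<open>x, y \<in> N[v]\<close> and \<open>|N[v]|\<close> minimal. In a graph
  without induced \<open>C4\<close> and \<open>P4\<close>, a non-edge \<open>ab\<close> inside \<open>N[v]\<close> forces \<open>N[a] \<subset> N[v]\<close>; by
  minimality some \<open>z \<in> {x, y}\<close> lies outside \<open>N[a]\<close>, and then \<open>N[z] \<subset> N[v]\<close> with \<open>z\<close> again a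
  common closed neighbour, a contradiction. So \<open>N[v]\<close> is a simplicial clique containing \<open>x, y\<close>.
  Complementation swaps \<open>2K2\<close> and \<open>C4\<close> and fixes \<open>P4\<close>, so the complement of a threshold
  graph is threshold. The bull is edge and co-edge simplicial but contains an induced \<open>P4\<close>.\<close>

lemma graph_sym: "graph V E \<Longrightarrow> x \<in> V \<Longrightarrow> y \<in> V \<Longrightarrow> E x y \<Longrightarrow> E y x"
  unfolding graph_def by blast

lemma graph_irrefl: "graph V E \<Longrightarrow> x \<in> V \<Longrightarrow> \<not> E x x"
  unfolding graph_def by blast

lemma graph_compl_rel: "graph V E \<Longrightarrow> graph V (compl_rel E)"
  unfolding graph_def compl_rel_def by auto

lemma P4_iff: "P4 x y \<longleftrightarrow> (x=0\<and>y=1 \<or> x=1\<and>y=0 \<or> x=1\<and>y=2 \<or> x=2\<and>y=1 \<or> x=2\<and>y=3 \<or> x=3\<and>y=2)"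
  by (auto simp: P4_def doubleton_eq_iff)

lemma C4_iff: "C4 x y \<longleftrightarrow> (x=0\<and>y=1 \<or> x=1\<and>y=0 \<or> x=1\<and>y=2 \<or> x=2\<and>y=1 \<or> x=2\<and>y=3 \<or> x=3\<and>y=2
   \<or> x=3\<and>y=0 \<or> x=0\<and>y=3)"
  by (auto simp: C4_def doubleton_eq_iff)

lemma twoK2_iff: "twoK2 x y \<longleftrightarrow> (x=0\<and>y=1 \<or> x=1\<and>y=0 \<or> x=2\<and>y=3 \<or> x=3\<and>y=2)"
  by (auto simp: twoK2_def doubleton_eq_iff)

lemma atLeastAtMost_0_3: "{0..3::nat} = {0,1,2,3}"
  by auto

lemma has_induced_of_list:
  assumes "distinct [a,b,c,d]" "set [a,b,c,d] \<subseteq> V"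
    and "\<forall>i\<in>{0,1,2,3::nat}. \<forall>j\<in>{0,1,2,3}. E ([a,b,c,d]!i) ([a,b,c,d]!j) = F i j"
  shows "has_induced V E {0..3} F"
  unfolding has_induced_def
proof (intro exI[of _ "\<lambda>i. [a,b,c,d]!i"] conjI)
  show "inj_on (\<lambda>i. [a,b,c,d]!i) {0..3}"
    using assms(1) unfolding inj_on_def atLeastAtMost_0_3 by (auto simp: nth_eq_iff_index_eq)
  show "(\<lambda>i. [a,b,c,d]!i) ` {0..3} \<subseteq> V"
    using assms(2) unfolding atLeastAtMost_0_3 by auto
  show "\<forall>x\<in>{0..3}. \<forall>y\<in>{0..3}. E ([a,b,c,d]!x) ([a,b,c,d]!y) = F x y"
    using assms(3) unfolding atLeastAtMost_0_3 by blast
qed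

lemma has_induced_compl_rel:
  assumes g: "graph V E" and h: "has_induced V (compl_rel E) W F"
    and gW: "g ` W' \<subseteq> W" and ig: "inj_on g W'"
    and H: "\<forall>x\<in>W'. \<forall>y\<in>W'. H x y \<longleftrightarrow> (x \<noteq> y \<and> \<not> F (g x) (g y))"
  shows "has_induced V E W' H"
proof -
  obtain f where inj: "inj_on f W" and fW: "f ` W \<subseteq> V"
    and fF: "\<forall>x\<in>W. \<forall>y\<in>W. compl_rel E (f x) (f y) \<longleftrightarrow> F x y"
    using h unfolding has_induced_def by blast
  have "E (f (g x)) (f (g y)) = H x y" if x: "x \<in> W'" and y: "y \<in> W'" for x y
  proof (cases "x = y")
    case True
    have "f (g x) \<in> V" using fW gW x by auto
    then show ?thesis using H x graph_irrefl[OF g] True by auto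
  next
    case False
    then have "f (g x) \<noteq> f (g y)"
      using inj ig gW x y by (auto dest: inj_onD)
    moreover have "g x \<in> W" "g y \<in> W" using gW x y by auto
    ultimately show ?thesis using fF H x y False unfolding compl_rel_def by auto
  qed
  moreover have "inj_on (f \<circ> g) W'"
    using inj ig gW by (simp add: comp_inj_on inj_on_subset)
  moreover have "(f \<circ> g) ` W' \<subseteq> V" using fW gW by auto
  ultimately show ?thesis
    unfolding has_induced_def by (intro exI[of _ "f \<circ> g"]) auto
qed

lemma threshold_compl_rel:
  assumes g: "graph V E" and t: "threshold V E"
  shows "threshold V (compl_rel E)"
proof -
  define g1 :: "nat \<Rightarrow> nat" where "g1 = (\<lambda>i. [0,2,1,3]!i)"
  define g2 :: "nat \<Rightarrow> nat" where "g2 = (\<lambda>i. [2,0,3,1]!i)"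
  have g1: "g1 ` {0..3} \<subseteq> {0..3}" "inj_on g1 {0..3}"
    and g2: "g2 ` {0..3} \<subseteq> {0..3}" "inj_on g2 {0..3}"
    unfolding g1_def g2_def atLeastAtMost_0_3 inj_on_def by auto
  have C4: "\<forall>x\<in>{0..3}. \<forall>y\<in>{0..3}. C4 x y \<longleftrightarrow> (x \<noteq> y \<and> \<not> twoK2 (g1 x) (g1 y))"
    and twoK2: "\<forall>x\<in>{0..3}. \<forall>y\<in>{0..3}. twoK2 x y \<longleftrightarrow> (x \<noteq> y \<and> \<not> C4 (g1 x) (g1 y))"
    and P4: "\<forall>x\<in>{0..3}. \<forall>y\<in>{0..3}. P4 x y \<longleftrightarrow> (x \<noteq> y \<and> \<not> P4 (g2 x) (g2 y))"
    unfolding atLeastAtMost_0_3 g1_def g2_def by (auto simp: C4_iff twoK2_iff P4_iff)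
  show ?thesis
    using has_induced_compl_rel[OF g _ g1 C4] has_induced_compl_rel[OF g _ g1 twoK2]
      has_induced_compl_rel[OF g _ g2 P4] t
    unfolding threshold_def by blast
qed

text \<open>A neighbour \<open>p \<noteq> v\<close> of \<open>a\<close> not adjacent to \<open>v\<close> would yield the induced cycle
  \<open>a p b v\<close> or the induced path \<open>p a v b\<close>.\<close>

lemma adjacent_if_C4_P4_free:
  assumes g: "graph V E"
    and C4_free: "\<not> has_induced V E {0..3} C4" and P4_free: "\<not> has_induced V E {0..3} P4"
    and V: "v \<in> V" "a \<in> V" "b \<in> V" "p \<in> V"
    and va: "E v a" and vb: "E v b" and ab: "a \<noteq> b" "\<not> E a b"
    and ap: "E a p" and pv: "p \<noteq> v"
  shows "E v p"
proof (rule ccontr)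
  assume vp: "\<not> E v p"
  note sym = graph_sym[OF g] and irr = graph_irrefl[OF g]
  have distinct: "distinct [a, p, b, v]"
    using va vb ap ab pv irr V by auto
  have loops: "\<not> E a a" "\<not> E b b" "\<not> E p p" "\<not> E v v" using irr V by auto
  have edges: "E a v" "E b v" "E p a" "\<not> E b a" "\<not> E p v"
    using va vb ap ab vp sym V by auto
  show False
  proof (cases "E p b")
    case True
    then have "E b p" using sym V by auto
    have "has_induced V E {0..3} C4"
      using distinct V edges loops va vb vp ap ab True \<open>E b p\<close>
      by (intro has_induced_of_list[of a p b v]) (auto simp: C4_iff)
    then show False using C4_free by blast
  next
    case False
    then have "\<not> E b p" using sym V by auto
    have "has_induced V E {0..3} P4"
      using distinct V edges loops va vb vp ap ab False \<open>\<not> E b p\<close>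
      by (intro has_induced_of_list[of p a v b]) (auto simp: P4_iff)
    then show False using P4_free by blast
  qed
qed

lemma closed_nbhd_psubset_if_C4_P4_free:
  assumes g: "graph V E"
    and C4_free: "\<not> has_induced V E {0..3} C4" and P4_free: "\<not> has_induced V E {0..3} P4"
    and vV: "v \<in> V" and aN: "a \<in> closed_nbhd V E v" and bN: "b \<in> closed_nbhd V E v"
    and ab: "a \<noteq> b" "\<not> E a b"
  shows "closed_nbhd V E a \<subset> closed_nbhd V E v"
proof -
  note sym = graph_sym[OF g]
  have aV: "a \<in> V" and bV: "b \<in> V" using aN bN unfolding closed_nbhd_def by auto
  have va: "E v a" and vb: "E v b"
    using aN bN ab sym[OF bV aV] unfolding closed_nbhd_def by auto
  have "p \<in> closed_nbhd V E v" if p: "p \<in> closed_nbhd V E a" for p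
  proof (cases "p = v")
    case False
    have "p \<in> V" "p \<noteq> a \<Longrightarrow> E a p" using p unfolding closed_nbhd_def by auto
    then show ?thesis
      using adjacent_if_C4_P4_free[OF g C4_free P4_free vV aV bV _ va vb ab _ False] aN
      unfolding closed_nbhd_def by blast
  qed (use vV in \<open>simp add: closed_nbhd_def\<close>)
  moreover have "b \<notin> closed_nbhd V E a" using ab unfolding closed_nbhd_def by auto
  ultimately show ?thesis using bN by blast
qed

lemma edge_simplicial_if_C4_P4_free:
  assumes g: "graph V E"
    and C4_free: "\<not> has_induced V E {0..3} C4" and P4_free: "\<not> has_induced V E {0..3} P4"
  shows "edge_simplicial V E"
  unfolding edge_simplicial_def
proof (intro ballI impI)
  fix x y assume xV: "x \<in> V" and yV: "y \<in> V" and xy: "E x y"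
  let ?N = "closed_nbhd V E"
  define S where "S = {v\<in>V. x \<in> ?N v \<and> y \<in> ?N v}"
  have "E y x" using graph_sym[OF g xV yV xy] .
  then have xS: "x \<in> S" and yS: "y \<in> S"
    using xV yV xy unfolding S_def closed_nbhd_def by auto
  then obtain v where vS: "v \<in> S" and v_min: "\<And>w. w \<in> S \<Longrightarrow> card (?N v) \<le> card (?N w)"
    using ex_has_least_nat[of "\<lambda>v. v \<in> S" x "\<lambda>v. card (?N v)"] by blast
  have vV: "v \<in> V" using vS unfolding S_def by auto
  have "finite (?N v)" using g unfolding graph_def closed_nbhd_def by simp
  then have card_less: "card (?N a) < card (?N v)"
    if "a \<in> ?N v" "b \<in> ?N v" "a \<noteq> b" "\<not> E a b" for a b
    using closed_nbhd_psubset_if_C4_P4_free[OF g C4_free P4_free vV that] psubset_card_mono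
    by blast
  have "E a b" if aN: "a \<in> ?N v" and bN: "b \<in> ?N v" and ab: "a \<noteq> b" for a b
  proof (rule ccontr)
    assume "\<not> E a b"
    then have "a \<notin> S" using card_less[OF aN bN ab] v_min by fastforce
    then obtain z where z: "z \<in> {x, y}" "z \<notin> ?N a"
      using aN unfolding S_def closed_nbhd_def by auto
    have zS: "z \<in> S" using z xS yS by auto
    then have zV: "z \<in> V" and zN: "z \<in> ?N v" using z vS unfolding S_def by auto
    have aV: "a \<in> V" using aN unfolding closed_nbhd_def by simp
    have "z \<noteq> a" "\<not> E a z" using z zV unfolding closed_nbhd_def by auto
    then have "card (?N z) < card (?N v)"
      using card_less[OF zN aN] graph_sym[OF g aV zV] graph_sym[OF g zV aV] by blast
    then show False using v_min[OF zS] by simp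
  qed
  then have "clique V E (?N v)"
    unfolding clique_def closed_nbhd_def by auto
  then show "\<exists>C. simplicial_clique V E C \<and> x \<in> C \<and> y \<in> C"
    using vV vS unfolding simplicial_clique_def S_def by blast
qed

lemma edge_simplicial_if_threshold:
  "graph V E \<Longrightarrow> threshold V E \<Longrightarrow> edge_simplicial V E"
  unfolding threshold_def by (blast intro: edge_simplicial_if_C4_P4_free)

definition bull :: "nat \<Rightarrow> nat \<Rightarrow> bool" where
  "bull x y \<longleftrightarrow> (x,y) \<in> {(0,1),(1,0),(1,2),(2,1),(2,3),(3,2),(1,4),(4,1),(2,4),(4,2)}"

lemma atLeastAtMost_0_4: "{0..4::nat} = {0,1,2,3,4}"
  by auto

lemma graph_bull: "graph {0..4} bull"
  unfolding graph_def atLeastAtMost_0_4 bull_def by auto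

lemma edge_simplicial_bull: "edge_simplicial {0..4} bull"
proof -
  have "closed_nbhd {0..4} bull 0 = {0,1}" "closed_nbhd {0..4} bull 3 = {2,3}"
    "closed_nbhd {0..4} bull 4 = {1,2,4}"
    unfolding closed_nbhd_def atLeastAtMost_0_4 bull_def by auto
  then have "simplicial_clique {0..4} bull {0,1}" "simplicial_clique {0..4} bull {2,3}"
    "simplicial_clique {0..4} bull {1,2,4}"
    unfolding simplicial_clique_def clique_def
    by (auto simp: bull_def atLeastAtMost_0_4 intro!: bexI[of _ 0] bexI[of _ 3] bexI[of _ 4])
  then show ?thesis
    unfolding edge_simplicial_def atLeastAtMost_0_4 by (auto simp: bull_def)
qed

lemma co_edge_simplicial_bull: "co_edge_simplicial {0..4} bull"
proof -
  let ?E = "compl_rel bull"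
  have "closed_nbhd {0..4} ?E 2 = {0,2}" "closed_nbhd {0..4} ?E 1 = {1,3}"
    "closed_nbhd {0..4} ?E 4 = {0,3,4}"
    unfolding closed_nbhd_def atLeastAtMost_0_4 bull_def compl_rel_def by auto
  then have "simplicial_clique {0..4} ?E {0,2}" "simplicial_clique {0..4} ?E {1,3}"
    "simplicial_clique {0..4} ?E {0,3,4}"
    unfolding simplicial_clique_def clique_def
    by (auto simp: bull_def atLeastAtMost_0_4 compl_rel_def
        intro!: bexI[of _ 2] bexI[of _ 1] bexI[of _ 4])
  then show ?thesis
    unfolding co_edge_simplicial_def edge_simplicial_def atLeastAtMost_0_4
    by (auto simp: bull_def compl_rel_def)
qed

lemma not_threshold_bull: "\<not> threshold {0..4} bull"
proof -
  have "has_induced {0..4} bull {0..3} P4"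
    by (rule has_induced_of_list[of 0 1 2 3]) (auto simp: atLeastAtMost_0_4 bull_def P4_iff)
  then show ?thesis unfolding threshold_def by blast
qed

theorem corollary33:
  shows "(\<forall>(V :: 'a set) E. graph V E \<and> threshold V E \<longrightarrow>
            edge_simplicial V E \<and> co_edge_simplicial V E)
       \<and> (\<exists>(V :: nat set) E. graph V E \<and> edge_simplicial V E \<and> co_edge_simplicial V E
            \<and> \<not> threshold V E)"
proof (intro conjI allI impI)
  fix V :: "'a set" and E assume "graph V E \<and> threshold V E"
  then show "edge_simplicial V E" "co_edge_simplicial V E"
    unfolding co_edge_simplicial_def
    by (auto intro: edge_simplicial_if_threshold graph_compl_rel threshold_compl_rel)
next
  show "\<exists>(V :: nat set) E. graph V E \<and> edge_simplicial V E \<and> co_edge_simplicial V E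
            \<and> \<not> threshold V E"
    using graph_bull edge_simplicial_bull co_edge_simplicial_bull not_threshold_bull by blast
qed

end
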